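(* Let $\beta$ be an algebraic number such that one of its conjugates (roots of its minimal polynomial over $\mathbb{Q}$) is a real number greater than $1$. Then $p_\beta(\alpha) < \infty$ for every $\alpha \in \mathbb{R}$.
   Context: For $\beta, \alpha \in \mathbb{C}$, $p_\beta(\alpha) \in \mathbb{Z}_{\geq 0}\cup\{\infty\}$ is the number of polynomials $f \in \mathbb{Z}_{\geq 0}[x]$ (non-negative integer coefficients) with $f(\beta) = \alpha$. *)

theory Defs
  imports Complex_Main "HOL-Computational_Algebra.Polynomial" "HOL-Library.Extended_Nat"
begin

text \<open>Minimal polynomial over the rationals of a complex number: the unique monic
  irreducible rational polynomial having it as a root (meaningful for algebraic numbers).\<close>
definition rat_min_poly :: "complex \<Rightarrow> rat poly" where
  "rat_min_poly b = (THE p. lead_coeff p = 1 \<and> irreducible p \<and> poly (map_poly of_rat p) b = 0)"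

definition conjugates :: "complex \<Rightarrow> complex set" where
  "conjugates b = {z. poly (map_poly of_rat (rat_min_poly b)) z = 0}"

text \<open>Polynomials with non-negative integer coefficients are modelled as nat poly.\<close>
definition rep_set :: "complex \<Rightarrow> complex \<Rightarrow> nat poly set" where
  "rep_set b a = {f :: nat poly. poly (map_poly of_nat f) b = a}"

definition p_count :: "complex \<Rightarrow> complex \<Rightarrow> enat" where
  "p_count b a = (if finite (rep_set b a) then enat (card (rep_set b a)) else \<infinity>)"

end

theory Submission
  imports Defs "HOL-Computational_Algebra.Field_as_Ring"
begin

text \<open>
  A rational polynomial of least degree vanishing at \<open>\<beta>\<close> divides every rational polynomial
  vanishing at \<open>\<beta>\<close>; normalised, it is the minimal polynomial. Hence if two polynomials
  \<open>f, g\<close> with non-negative integer coefficients agree at \<open>\<beta>\<close>, they agree at every conjugate,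
  in particular at the real conjugate \<open>t > 1\<close>. But only finitely many such \<open>f\<close> take a
  prescribed value \<open>C\<close> at \<open>t\<close>: every term \<open>c\<^sub>i t\<^sup>i\<close> is at most \<open>C\<close>, which bounds
  the coefficients by \<open>C\<close> and the degree by \<open>log\<^sub>t C\<close>.
\<close>

lemma map_poly_of_rat_diff:
  "map_poly (of_rat :: rat \<Rightarrow> 'a::field_char_0) (p - q) = map_poly of_rat p - map_poly of_rat q"
  by (intro poly_eqI) (simp add: coeff_map_poly of_rat_diff)

lemma map_poly_of_rat_mult:
  "map_poly (of_rat :: rat \<Rightarrow> 'a::field_char_0) (p * q) = map_poly of_rat p * map_poly of_rat q"
  by (intro poly_eqI) (simp add: coeff_map_poly coeff_mult of_rat_sum of_rat_mult)

lemma rat_poly_min_degree_root_dvd: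
  fixes q p :: "rat poly" and b :: "'a::field_char_0"
  assumes "q \<noteq> 0" and q_root: "poly (map_poly of_rat q) b = 0"
    and min: "\<And>r. r \<noteq> 0 \<Longrightarrow> poly (map_poly of_rat r) b = 0 \<Longrightarrow> degree q \<le> degree r"
    and p_root: "poly (map_poly of_rat p) b = 0"
  shows "q dvd p"
proof -
  have "p mod q = p - p div q * q" by (simp add: minus_div_mult_eq_mod)
  then have mod_root: "poly (map_poly of_rat (p mod q)) b = 0"
    using q_root p_root by (simp add: map_poly_of_rat_diff map_poly_of_rat_mult)
  have "p mod q = 0"
  proof (rule ccontr)
    assume "p mod q \<noteq> 0"
    then have "degree (p mod q) < degree q" using degree_mod_less[OF \<open>q \<noteq> 0\<close>, of p] by simp
    with min[OF \<open>p mod q \<noteq> 0\<close> mod_root] show False by simp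
  qed
  then show ?thesis by (simp add: dvd_eq_mod_eq_0)
qed

lemma rat_poly_min_degree_root_irreducible:
  fixes q :: "rat poly" and b :: "'a::field_char_0"
  assumes "q \<noteq> 0" and q_root: "poly (map_poly of_rat q) b = 0"
    and min: "\<And>r. r \<noteq> 0 \<Longrightarrow> poly (map_poly of_rat r) b = 0 \<Longrightarrow> degree q \<le> degree r"
  shows "irreducible q"
proof (rule irreducibleI')
  show "\<not> is_unit q"
  proof
    assume "is_unit q"
    then obtain c where "q = [:c:]" "c \<noteq> 0"
      using \<open>q \<noteq> 0\<close> by (auto simp: is_unit_poly_iff)
    with q_root show False by (simp add: map_poly_pCons)
  qed
next
  fix d assume "d dvd q"
  then obtain e where q: "q = d * e" by (elim dvdE)
  have "poly (map_poly of_rat d) b = 0 \<or> poly (map_poly of_rat e) b = 0"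
    using q_root by (simp add: q map_poly_of_rat_mult)
  then show "q dvd d \<or> is_unit d"
  proof
    assume "poly (map_poly of_rat d) b = 0"
    then show ?thesis using rat_poly_min_degree_root_dvd[OF assms] by blast
  next
    assume "poly (map_poly of_rat e) b = 0"
    then have "q dvd e" using rat_poly_min_degree_root_dvd[OF assms] by blast
    then have "d * e dvd 1 * e" by (simp add: q)
    moreover have "e \<noteq> 0" using \<open>q \<noteq> 0\<close> q by simp
    ultimately show ?thesis by simp
  qed
qed fact

lemma monic_min_degree_rat_poly_rootE:
  fixes p :: "rat poly" and b :: "'a::field_char_0"
  assumes "p \<noteq> 0" "poly (map_poly of_rat p) b = 0"
  obtains q where "lead_coeff q = 1" "poly (map_poly of_rat q) b = 0"
    "\<And>r. r \<noteq> 0 \<Longrightarrow> poly (map_poly of_rat r) b = 0 \<Longrightarrow> degree q \<le> degree r"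
proof -
  obtain q0 :: "rat poly" where q0: "q0 \<noteq> 0" "poly (map_poly of_rat q0) b = 0"
    and min: "\<And>r. r \<noteq> 0 \<Longrightarrow> poly (map_poly of_rat r) b = 0 \<Longrightarrow> degree q0 \<le> degree r"
    using ex_has_least_nat[of "\<lambda>r. r \<noteq> 0 \<and> poly (map_poly of_rat r) b = 0" p degree] assms
    by blast
  define q where "q = smult (inverse (lead_coeff q0)) q0"
  have "lead_coeff q = 1" "degree q = degree q0"
    using q0(1) by (simp_all add: q_def)
  moreover have "poly (map_poly of_rat q) b = 0"
    using q0(2) by (simp add: q_def map_poly_smult of_rat_mult)
  ultimately show ?thesis using that min by metis
qed

lemma irreducible_dvd_if_common_root:
  fixes m p :: "rat poly" and b :: "'a::field_char_0"
  assumes "irreducible m" "poly (map_poly of_rat m) b = 0" "poly (map_poly of_rat p) b = 0"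
  shows "m dvd p"
proof -
  have "m \<noteq> 0" using assms(1) by auto
  obtain q where q: "lead_coeff q = 1" "poly (map_poly of_rat q) b = 0"
    and min: "\<And>r. r \<noteq> 0 \<Longrightarrow> poly (map_poly of_rat r) b = 0 \<Longrightarrow> degree q \<le> degree r"
    using monic_min_degree_rat_poly_rootE[OF \<open>m \<noteq> 0\<close> assms(2)] by blast
  have "q \<noteq> 0" using q(1) by auto
  have "\<not> is_unit q"
    using rat_poly_min_degree_root_irreducible[OF \<open>q \<noteq> 0\<close> q(2) min] by (rule irreducible_not_unit)
  moreover have "q dvd m"
    using rat_poly_min_degree_root_dvd[OF \<open>q \<noteq> 0\<close> q(2) min assms(2)] .
  ultimately have "m dvd q" using irreducibleD'[OF assms(1)] by blast
  also have "q dvd p"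
    using rat_poly_min_degree_root_dvd[OF \<open>q \<noteq> 0\<close> q(2) min assms(3)] .
  finally show ?thesis .
qed

lemma rat_min_poly_spec:
  assumes "algebraic b"
  shows "lead_coeff (rat_min_poly b) = 1" "irreducible (rat_min_poly b)"
    "poly (map_poly of_rat (rat_min_poly b)) b = 0"
proof -
  obtain p :: "complex poly" where p: "\<forall>i. coeff p i \<in> \<rat>" "p \<noteq> 0" "poly p b = 0"
    using assms unfolding algebraic_altdef by blast
  obtain p' :: "rat poly" where "p = map_poly of_rat p'"
    using ratpolyE[of p] p(1) by blast
  with p have p': "p' \<noteq> 0" "poly (map_poly of_rat p') b = 0"
    by auto
  obtain q where q: "lead_coeff q = 1" "poly (map_poly of_rat q) b = 0"
    and min: "\<And>r. r \<noteq> 0 \<Longrightarrow> poly (map_poly of_rat r) b = 0 \<Longrightarrow> degree q \<le> degree r"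
    using monic_min_degree_rat_poly_rootE[OF p'] by blast
  have "q \<noteq> 0" using q(1) by auto
  have "irreducible q"
    using \<open>q \<noteq> 0\<close> q(2) min by (rule rat_poly_min_degree_root_irreducible)
  have "rat_min_poly b = q"
    unfolding rat_min_poly_def
  proof (rule the_equality)
    fix r assume r: "lead_coeff r = 1 \<and> irreducible r \<and> poly (map_poly of_rat r) b = 0"
    have "r dvd q" using r q(2) by (intro irreducible_dvd_if_common_root[of r b]) auto
    moreover have "q dvd r"
      using r \<open>irreducible q\<close> q(2) by (intro irreducible_dvd_if_common_root[of q b]) auto
    ultimately show "r = q"
      by (rule associated_eqI) (use r q(1) in \<open>simp_all add: normalize_poly_eq_map_poly\<close>)
  qed (simp add: q \<open>irreducible q\<close>)
  then show "lead_coeff (rat_min_poly b) = 1" "irreducible (rat_min_poly b)"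
    "poly (map_poly of_rat (rat_min_poly b)) b = 0"
    using q \<open>irreducible q\<close> by simp_all
qed

lemma conjugates_share_rat_roots:
  assumes "algebraic b" "c \<in> conjugates b" "poly (map_poly of_rat p) b = 0"
  shows "poly (map_poly of_rat p) c = 0"
proof -
  have "rat_min_poly b dvd p"
    using rat_min_poly_spec(2,3)[OF assms(1)] assms(3) by (rule irreducible_dvd_if_common_root)
  then obtain k where "p = rat_min_poly b * k" by (elim dvdE)
  with assms(2) show ?thesis by (simp add: conjugates_def map_poly_of_rat_mult)
qed

lemma poly_map_poly_of_nat_of_real:
  "poly (map_poly of_nat f) (of_real t :: 'a::{comm_ring_1, real_algebra_1}) =
    of_real (poly (map_poly of_nat f) t)"
  by (induction f) (simp_all add: map_poly_pCons)

lemma of_nat_coeff_mult_power_le_poly: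
  fixes t :: "'a::linordered_semidom"
  assumes "t \<ge> 0"
  shows "of_nat (coeff f i) * t ^ i \<le> poly (map_poly of_nat f) t"
proof (cases "i \<le> degree f")
  case True
  have "poly (map_poly of_nat f) t = (\<Sum>j\<le>degree f. of_nat (coeff f j) * t ^ j)"
    by (simp add: poly_altdef coeff_map_poly degree_map_poly)
  moreover have "of_nat (coeff f i) * t ^ i \<le> (\<Sum>j\<le>degree f. of_nat (coeff f j) * t ^ j)"
    using True assms by (intro member_le_sum) auto
  ultimately show ?thesis by simp
next
  case False
  then show ?thesis using assms by (simp add: coeff_eq_0 poly_altdef coeff_map_poly sum_nonneg)
qed

lemma finite_bounded_nat_polys:
  "finite {f :: nat poly. degree f \<le> N \<and> (\<forall>i. coeff f i \<le> M)}"
proof (rule finite_subset)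
  show "{f :: nat poly. degree f \<le> N \<and> (\<forall>i. coeff f i \<le> M)}
      \<subseteq> Poly ` {xs. set xs \<subseteq> {..M} \<and> length xs = Suc N}"
  proof safe
    fix f :: "nat poly" assume "degree f \<le> N" "\<forall>i. coeff f i \<le> M"
    moreover have "f = Poly (map (coeff f) [0..<Suc N])"
      using \<open>degree f \<le> N\<close>
      by (intro poly_eqI) (auto simp: nth_default_def coeff_eq_0 simp del: upt_Suc)
    ultimately show "f \<in> Poly ` {xs. set xs \<subseteq> {..M} \<and> length xs = Suc N}"
      by (intro image_eqI[of _ _ "map (coeff f) [0..<Suc N]"]) auto
  qed
qed (simp add: finite_lists_length_eq)

lemma finite_nat_poly_level_set:
  fixes t C :: real
  assumes "t > 1"
  shows "finite {f :: nat poly. poly (map_poly of_nat f) t = C}"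
proof -
  obtain N where N: "C < t ^ N" using real_arch_pow[OF assms] by blast
  have "{f :: nat poly. poly (map_poly of_nat f) t = C}
      \<subseteq> {f. degree f \<le> N \<and> (\<forall>i. coeff f i \<le> nat \<lfloor>C\<rfloor>)}"
  proof
    fix f :: "nat poly" assume "f \<in> {f. poly (map_poly of_nat f) t = C}"
    then have term_le: "real (coeff f j) * t ^ j \<le> C" for j
      using of_nat_coeff_mult_power_le_poly[of t f j] assms by simp
    have "coeff f i \<le> nat \<lfloor>C\<rfloor>" for i
    proof -
      have "real (coeff f i) \<le> real (coeff f i) * t ^ i"
        using assms by (simp add: mult_le_cancel_left1)
      with term_le[of i] show ?thesis by linarith
    qed
    moreover have "degree f \<le> N"
    proof (cases "f = 0")
      case False
      then have "1 \<le> real (coeff f (degree f))"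
        using leading_coeff_neq_0[OF False] by (simp add: Suc_le_eq del: leading_coeff_0_iff)
      then have "t ^ degree f \<le> real (coeff f (degree f)) * t ^ degree f"
        using assms by (simp add: mult_le_cancel_right1)
      also have "\<dots> \<le> C" by (rule term_le)
      finally have "t ^ degree f < t ^ N" using N by simp
      then show ?thesis using assms by (simp add: power_strict_increasing_iff)
    qed simp
    ultimately show "f \<in> {f. degree f \<le> N \<and> (\<forall>i. coeff f i \<le> nat \<lfloor>C\<rfloor>)}" by simp
  qed
  then show ?thesis using finite_bounded_nat_polys by (rule finite_subset)
qed

lemma finite_rep_set:
  assumes "algebraic b" "complex_of_real t \<in> conjugates b" "t > 1"
  shows "finite (rep_set b a)"
proof (cases "rep_set b a = {}")
  case False
  then obtain f0 where f0: "f0 \<in> rep_set b a" by blast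
  have "rep_set b a \<subseteq> {f. poly (map_poly of_nat f) t = poly (map_poly of_nat f0) t}"
  proof
    fix f assume f: "f \<in> rep_set b a"
    define p :: "rat poly" where "p = map_poly of_nat f - map_poly of_nat f0"
    have eval: "poly (map_poly of_rat p) z = poly (map_poly of_nat f) z - poly (map_poly of_nat f0) z"
      for z :: complex
      by (simp add: p_def map_poly_of_rat_diff map_poly_map_poly o_def)
    have "poly (map_poly of_rat p) b = 0" using f f0 by (simp add: eval rep_set_def)
    then have "poly (map_poly of_rat p) (complex_of_real t) = 0"
      using conjugates_share_rat_roots assms(1,2) by blast
    then show "f \<in> {f. poly (map_poly of_nat f) t = poly (map_poly of_nat f0) t}"
      by (simp add: eval poly_map_poly_of_nat_of_real)
  qed
  then show ?thesis using finite_nat_poly_level_set[OF assms(3)] by (rule finite_subset)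
qed simp

theorem proposition5:
  fixes \<beta> :: complex
  assumes "algebraic \<beta>"
    and "\<exists>\<gamma>\<in>conjugates \<beta>. \<gamma> \<in> \<real> \<and> Re \<gamma> > 1"
  shows "\<forall>\<alpha>::real. p_count \<beta> (complex_of_real \<alpha>) < \<infinity>"
proof
  fix \<alpha> :: real
  obtain \<gamma> where "\<gamma> \<in> conjugates \<beta>" "\<gamma> \<in> \<real>" "Re \<gamma> > 1" using assms(2) by blast
  then have "finite (rep_set \<beta> (complex_of_real \<alpha>))"
    using finite_rep_set[OF assms(1), of "Re \<gamma>"] by (simp add: of_real_Re)
  then show "p_count \<beta> (complex_of_real \<alpha>) < \<infinity>" by (simp add: p_count_def)
qed

end
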